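(* Under the setting of the context, let $p\in\mathbb R$ and $\epsilon\in(0,1]$, and assume $\mathbb E[|Z|^{1+\epsilon}]<\infty$. Then there is a constant $C$ (depending on $p$, $\epsilon$ and the laws of $W$ and $Z$, but not on $j$ or $m$) such that for all $m\ge0$ and $j\ge0$, $$\mathbb E\big[|\mathcal M^{(m)}_j(p)|^{1+\epsilon}\big]\le C\,2^{-j(1+\epsilon)\tau(p)}\sum_{k=0}^j2^{-k\tau(p(1+\epsilon))}\,2^{k(1+\epsilon)\tau(p)}.$$
   Context: Let $W$ be a real random variable with $\mathbb P(W>0)=1$, $\mathbb E[W]=1$ and $\mathbb E[W^q]<\infty$ for all $q\in\mathbb R$; define $\tau(q)=q-\log_2\mathbb E[W^q]-1$. For words $r=(r_1,\dots,r_j)\in\{0,1\}^j$ write $r|i=(r_1,\dots,r_i)$ and $rr'$ for concatenation. For each $m\ge0$ let $(W^{(m)}_r)_r$, indexed by nonempty finite words, be i.i.d. copies of $W$, independent across $m$. For each $m,j\ge0$ and $r\in\{0,1\}^j$ let $Z^{(m,r)}$ be a real random variable measurable with respect to $\sigma(W^{(m)}_{rr'}: r'\text{ nonempty})$, with law not depending on $(m,r)$; $Z$ denotes a variable with this law. Define $\mathcal M^{(m)}_j(p)=2^{-jp}\sum_{r\in\{0,1\}^j}\prod_{i=1}^j(W^{(m)}_{r|i})^pZ^{(m,r)}$. *)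

theory Defs
  imports "HOL-Probability.Probability"
begin

text \<open>Words in {0,1}^j are represented as bool lists of length j; r|i is take i r.\<close>

definition tau :: "'a measure \<Rightarrow> ('a \<Rightarrow> real) \<Rightarrow> real \<Rightarrow> real" where
  "tau M W q = q - log 2 (integral\<^sup>L M (\<lambda>x. W x powr q)) - 1"

definition measurable_wrt :: "'a measure \<Rightarrow> ('a \<Rightarrow> real) \<Rightarrow> ('i \<Rightarrow> 'a \<Rightarrow> real) \<Rightarrow> 'i set \<Rightarrow> bool" where
  "measurable_wrt M X Y I \<longleftrightarrow>
     (\<forall>A \<in> sets borel. X -` A \<inter> space M \<in>
        sigma_sets (space M) (\<Union>i\<in>I. {Y i -` B \<inter> space M | B. B \<in> sets borel}))"

definition cascM :: "(nat \<Rightarrow> bool list \<Rightarrow> 'a \<Rightarrow> real) \<Rightarrow> (nat \<Rightarrow> bool list \<Rightarrow> 'a \<Rightarrow> real)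
    \<Rightarrow> nat \<Rightarrow> nat \<Rightarrow> real \<Rightarrow> 'a \<Rightarrow> real" where
  "cascM Wf Zf m j p x = 2 powr (- real j * p) *
     (\<Sum>r\<in>{r::bool list. length r = j}. (\<Prod>i\<in>{1..j}. Wf m (take i r) x powr p) * Zf m r x)"

end

theory Submission
  imports Defs
begin

(*
  Fix the exponent kappa = 1 + epsilon in (1,2].  The key pointwise fact is a von Bahr--Esseen
  type inequality  |x + y|^kappa <= |x|^kappa + kappa phi(x) y + 17 |y|^kappa,  where
  phi(x) = sgn x |x|^(kappa-1).  Taking expectations, a sum X + T_1 + ... + T_n whose
  increments are "orthogonal" to phi of all earlier partial sums satisfies
  E|X + sum T_i|^kappa <= E|X|^kappa + 17 sum E|T_i|^kappa.

  The cascade M_j(p) is split along the binary tree: Y_0 = 2^(-jp) (2e)^j E[Z] is constant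
  (e = E[W^p]), each Y_(k+1) - Y_k is a sum over words s of length k of increments
  c * Q(s) * U(s) where Q(s) is the weight product along s and U(s) the centred sum of the
  weights of the two children of s, and finally M_j(p) - Y_j is a sum of increments
  c * Q(r) * (Z_r - E Z).  By independence of the weights, every increment is centred given
  everything generated by the earlier words, which gives the required orthogonality.
  Summing the resulting bounds over the levels and rewriting the constants through tau gives
  the claimed estimate.
*)

lemma powr_one_plus_le:
  fixes r t :: real
  assumes r: "1 < r" "r \<le> 2" and t: "\<bar>t\<bar> \<le> 1/2"
  shows "(1 + t) powr r \<le> 1 + r * t + 2 * t\<^sup>2"
proof -
  define g where "g t = 1 + r * t + 2 * t\<^sup>2 - (1 + t) powr r" for t
  define g' where "g' t = r + 4 * t - r * (1 + t) powr (r - 1)" for t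
  have deriv: "(g has_real_derivative g' s) (at s)" if "-1 < s" for s
  proof -
    have "((\<lambda>s. (1 + s) powr r) has_real_derivative (r * (1 + s) powr (r - 1)) * 1) (at s)"
      by (rule DERIV_chain2[of "\<lambda>x. x powr r"]) (use that in \<open>auto intro!: derivative_eq_intros\<close>)
    then show ?thesis using that unfolding g_def g'_def
      by (auto intro!: derivative_eq_intros simp: power2_eq_square algebra_simps)
  qed
  \<comment> \<open>g decreases on [-1/2,0] and increases on [0,\<infinity>), and g 0 = 0.\<close>
  have g'_pos: "g' s \<ge> 0" if "0 \<le> s" for s
  proof -
    have "(1 + s) powr (r - 1) \<le> (1 + s) powr 1" using that r by (intro powr_mono) auto
    then have "r * (1 + s) powr (r - 1) \<le> r * (1 + s)" using r that by (simp add: mult_left_mono)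
    moreover have "r * s \<le> 4 * s" using that r by (intro mult_right_mono) auto
    ultimately show ?thesis unfolding g'_def by (auto simp: algebra_simps)
  qed
  have g'_neg: "g' s \<le> 0" if "s \<le> 0" "-1/2 \<le> s" for s
  proof -
    have "(1 + s) powr 1 \<le> (1 + s) powr (r - 1)" using that r by (intro powr_mono') auto
    then have "r * (1 + s) \<le> r * (1 + s) powr (r - 1)" using r that by (simp add: mult_left_mono)
    moreover have "4 * s \<le> r * s" using that r by (intro mult_right_mono_neg) auto
    ultimately show ?thesis unfolding g'_def by (auto simp: algebra_simps)
  qed
  have g0: "g 0 = 0" unfolding g_def by simp
  consider "t = 0" | "0 < t" | "t < 0" by linarith
  then have "g t \<ge> 0"
  proof cases
    case 2
    obtain z where "0 < z" "g t - g 0 = (t - 0) * g' z"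
      using MVT2[of 0 t g g'] 2 deriv t by force
    then show ?thesis using g'_pos[of z] 2 g0 by simp
  next
    case 3
    obtain z where z: "t < z" "z < 0" "g 0 - g t = (0 - t) * g' z"
      using MVT2[of t 0 g g'] 3 deriv t by force
    then have "(0 - t) * g' z \<le> 0" using g'_neg[of z] 3 t by (intro mult_nonneg_nonpos) auto
    then show ?thesis using z g0 by simp
  qed (simp add: g0)
  then show ?thesis unfolding g_def by simp
qed

text \<open>The signed power \<open>sgn x |x|^(r-1)\<close>, the derivative of \<open>|x|^r / r\<close>.\<close>

definition phi :: "real \<Rightarrow> real \<Rightarrow> real" where
  "phi r x = sgn x * \<bar>x\<bar> powr (r - 1)"

lemma phi_abs: "\<bar>phi r x\<bar> = \<bar>x\<bar> powr (r - 1)"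
  by (simp add: phi_def abs_mult sgn_if)

lemma borel_measurable_phi[measurable]:
  "f \<in> borel_measurable N \<Longrightarrow> (\<lambda>x. phi r (f x)) \<in> borel_measurable N"
  unfolding phi_def by (intro borel_measurable_times borel_measurable_sgn measurable_abs_powr) auto

lemma powr_add_small_le:
  fixes r x y :: real
  assumes r: "1 < r" "r \<le> 2" and x: "0 < x" and y: "\<bar>y\<bar> \<le> x / 2"
  shows "\<bar>x + y\<bar> powr r \<le> x powr r + r * x powr (r - 1) * y + 2 * \<bar>y\<bar> powr r"
proof -
  define t where "t = y / x"
  have t: "\<bar>t\<bar> \<le> 1/2" using x y by (simp add: t_def abs_divide field_simps)
  have xy: "x + y = x * (1 + t)" using x by (simp add: t_def field_simps)
  have scale: "\<bar>x + y\<bar> powr r = x powr r * (1 + t) powr r"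
    using x t by (simp add: xy abs_mult powr_mult)
  have "t\<^sup>2 = \<bar>t\<bar> powr 2" by (simp add: powr_numeral)
  also have "\<dots> \<le> \<bar>t\<bar> powr r" using t r by (intro powr_mono') auto
  finally have t2: "t\<^sup>2 \<le> \<bar>t\<bar> powr r" .
  have "\<bar>x + y\<bar> powr r \<le> x powr r * (1 + r * t + 2 * t\<^sup>2)"
    unfolding scale using powr_one_plus_le[OF r t] x by (intro mult_left_mono) auto
  also have "\<dots> \<le> x powr r * (1 + r * t + 2 * \<bar>t\<bar> powr r)"
    using t2 x by (intro mult_left_mono) auto
  also have "\<dots> = x powr r + r * x powr (r - 1) * y + 2 * \<bar>y\<bar> powr r"
  proof -
    have "x powr r * t = x powr (r - 1) * y" using x by (simp add: t_def powr_diff field_simps)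
    moreover have "x powr r * \<bar>t\<bar> powr r = \<bar>y\<bar> powr r" using x
      by (simp add: t_def abs_divide powr_divide)
    ultimately show ?thesis by (simp add: algebra_simps)
  qed
  finally show ?thesis .
qed

text \<open>Pointwise von Bahr--Esseen inequality: after integration the middle term vanishes
  whenever \<open>y\<close> is centred given \<open>x\<close>.\<close>

lemma powr_add_le_phi:
  fixes r x y :: real
  assumes r: "1 < r" "r \<le> 2"
  shows "\<bar>x + y\<bar> powr r \<le> \<bar>x\<bar> powr r + r * phi r x * y + 17 * \<bar>y\<bar> powr r"
proof (cases "\<bar>y\<bar> \<le> \<bar>x\<bar> / 2 \<and> x \<noteq> 0")
  case True
  show ?thesis
  proof (cases "x > 0")
    case True
    then show ?thesis using powr_add_small_le[OF r True] \<open>\<bar>y\<bar> \<le> \<bar>x\<bar> / 2 \<and> x \<noteq> 0\<close>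
      by (simp add: phi_def) (smt (verit) powr_ge_zero)
  next
    case False
    then have xn: "0 < -x" using True by auto
    have abs_eq: "\<bar>-x - y\<bar> = -x - y" using True False by auto
    have "\<bar>(-x) + (-y)\<bar> powr r \<le> (-x) powr r + r * (-x) powr (r - 1) * (-y) + 2 * \<bar>-y\<bar> powr r"
      using powr_add_small_le[OF r xn, of "-y"] True False abs_eq by (simp add: algebra_simps)
    then show ?thesis using xn by (simp add: phi_def) (smt (verit) powr_ge_zero)
  qed
next
  case False
  then have big: "\<bar>x\<bar> \<le> 2 * \<bar>y\<bar>" by auto
  have "\<bar>x + y\<bar> powr r \<le> (3 * \<bar>y\<bar>) powr r" using big r by (intro powr_mono2) auto
  also have "\<dots> = 3 powr r * \<bar>y\<bar> powr r" by (simp add: powr_mult)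
  also have "\<dots> \<le> 9 * \<bar>y\<bar> powr r"
  proof -
    have "3 powr r \<le> 3 powr (2::real)" using r by (intro powr_mono) auto
    then show ?thesis by (intro mult_right_mono) (auto simp: powr_numeral)
  qed
  finally have lhs: "\<bar>x + y\<bar> powr r \<le> 9 * \<bar>y\<bar> powr r" .
  have "\<bar>phi r x\<bar> \<le> (2 * \<bar>y\<bar>) powr (r - 1)"
    unfolding phi_abs using big r by (intro powr_mono2) auto
  also have "\<dots> = 2 powr (r - 1) * \<bar>y\<bar> powr (r - 1)" by (simp add: powr_mult)
  also have "\<dots> \<le> 2 * \<bar>y\<bar> powr (r - 1)"
  proof -
    have "2 powr (r - 1) \<le> 2 powr (1::real)" using r by (intro powr_mono) auto
    then show ?thesis by (intro mult_right_mono) auto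
  qed
  finally have phi_le: "\<bar>phi r x\<bar> \<le> 2 * \<bar>y\<bar> powr (r - 1)" .
  have "\<bar>r * phi r x * y\<bar> = r * \<bar>phi r x\<bar> * \<bar>y\<bar>" using r by (simp add: abs_mult)
  also have "\<dots> \<le> 2 * (2 * \<bar>y\<bar> powr (r - 1)) * \<bar>y\<bar>"
    using r phi_le by (intro mult_right_mono mult_mono) auto
  also have "\<dots> = 4 * \<bar>y\<bar> powr r"
    by (cases "y = 0") (auto simp: powr_diff field_simps)
  finally have "\<bar>r * phi r x * y\<bar> \<le> 4 * \<bar>y\<bar> powr r" .
  then show ?thesis using lhs by (smt (verit) powr_ge_zero)
qed

lemma powr_pred_mult_le:
  fixes r x y :: real
  assumes r: "1 < r"
  shows "\<bar>x\<bar> powr (r - 1) * \<bar>y\<bar> \<le> \<bar>x\<bar> powr r + \<bar>y\<bar> powr r"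
proof (cases "\<bar>x\<bar> \<le> \<bar>y\<bar>")
  case True
  have "\<bar>x\<bar> powr (r - 1) * \<bar>y\<bar> \<le> \<bar>y\<bar> powr (r - 1) * \<bar>y\<bar>"
    using True r by (intro mult_right_mono powr_mono2) auto
  also have "\<dots> = \<bar>y\<bar> powr r" by (cases "y = 0") (auto simp: powr_diff)
  finally show ?thesis by (smt (verit) powr_ge_zero)
next
  case False
  have "\<bar>x\<bar> powr (r - 1) * \<bar>y\<bar> \<le> \<bar>x\<bar> powr (r - 1) * \<bar>x\<bar>"
    using False r by (intro mult_left_mono) auto
  also have "\<dots> = \<bar>x\<bar> powr r" using False by (auto simp: powr_diff)
  finally show ?thesis by (smt (verit) powr_ge_zero)
qed

lemma integrable_phi_mult:
  fixes X Y :: "'a \<Rightarrow> real"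
  assumes r: "1 < r" and meas: "X \<in> borel_measurable M" "Y \<in> borel_measurable M"
    and int: "integrable M (\<lambda>x. \<bar>X x\<bar> powr r)" "integrable M (\<lambda>x. \<bar>Y x\<bar> powr r)"
  shows "integrable M (\<lambda>x. phi r (X x) * Y x)"
proof (rule Bochner_Integration.integrable_bound)
  show "integrable M (\<lambda>x. \<bar>X x\<bar> powr r + \<bar>Y x\<bar> powr r)" using int by auto
  show "(\<lambda>x. phi r (X x) * Y x) \<in> borel_measurable M" using meas by measurable
  show "AE x in M. norm (phi r (X x) * Y x) \<le> norm (\<bar>X x\<bar> powr r + \<bar>Y x\<bar> powr r)"
    using powr_pred_mult_le[OF r] by (auto simp: abs_mult phi_abs)
qed

lemma abs_diff3_powr_le:
  fixes a b c r :: real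
  assumes r: "1 < r" "r \<le> 2"
  shows "\<bar>a + b - c\<bar> powr r \<le> 9 * (\<bar>a\<bar> powr r + \<bar>b\<bar> powr r + \<bar>c\<bar> powr r)"
proof -
  define N where "N = max \<bar>a\<bar> (max \<bar>b\<bar> \<bar>c\<bar>)"
  have "\<bar>a + b - c\<bar> \<le> 3 * N" unfolding N_def by auto
  then have "\<bar>a + b - c\<bar> powr r \<le> (3 * N) powr r" using r by (intro powr_mono2) auto
  also have "\<dots> = 3 powr r * N powr r" using N_def by (simp add: powr_mult)
  also have "\<dots> \<le> 9 * N powr r"
  proof -
    have "3 powr r \<le> 3 powr (2::real)" using r by (intro powr_mono) auto
    then show ?thesis by (intro mult_right_mono) (auto simp: powr_numeral)
  qed
  also have "N powr r \<le> \<bar>a\<bar> powr r + \<bar>b\<bar> powr r + \<bar>c\<bar> powr r"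
    unfolding N_def by (auto simp: max_def)
  finally show ?thesis by simp
qed

lemma abs_le_one_plus_powr: "1 \<le> r \<Longrightarrow> \<bar>y::real\<bar> \<le> 1 + \<bar>y\<bar> powr r"
proof (cases "\<bar>y\<bar> \<le> 1")
  case False
  assume r: "1 \<le> r"
  have "\<bar>y\<bar> = \<bar>y\<bar> powr 1" using False by simp
  also have "\<dots> \<le> \<bar>y\<bar> powr r" using False r by (intro powr_mono) auto
  finally show ?thesis by simp
qed (simp add: add_increasing2)


lemma (in prob_space) moment_add_orthogonal:
  fixes X Y :: "'a \<Rightarrow> real"
  assumes r: "1 < r" "r \<le> 2" and meas: "X \<in> borel_measurable M" "Y \<in> borel_measurable M"
    and int: "integrable M (\<lambda>x. \<bar>X x\<bar> powr r)" "integrable M (\<lambda>x. \<bar>Y x\<bar> powr r)"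
    and orth: "(\<integral>x. phi r (X x) * Y x \<partial>M) = 0"
  shows "integrable M (\<lambda>x. \<bar>X x + Y x\<bar> powr r)"
    and "(\<integral>x. \<bar>X x + Y x\<bar> powr r \<partial>M) \<le> (\<integral>x. \<bar>X x\<bar> powr r \<partial>M) + 17 * (\<integral>x. \<bar>Y x\<bar> powr r \<partial>M)"
proof -
  define B where "B x = \<bar>X x\<bar> powr r + r * (phi r (X x) * Y x) + 17 * \<bar>Y x\<bar> powr r" for x
  have int_phi: "integrable M (\<lambda>x. phi r (X x) * Y x)" using integrable_phi_mult[OF r(1) meas int] .
  have int_B: "integrable M B" unfolding B_def using int int_phi by auto
  have le_B: "\<bar>X x + Y x\<bar> powr r \<le> B x" for x
    unfolding B_def using powr_add_le_phi[OF r, of "X x" "Y x"] by (simp add: mult.assoc)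
  show int_sum: "integrable M (\<lambda>x. \<bar>X x + Y x\<bar> powr r)"
  proof (rule Bochner_Integration.integrable_bound[OF int_B])
    show "(\<lambda>x. \<bar>X x + Y x\<bar> powr r) \<in> borel_measurable M" using meas by measurable
    show "AE x in M. norm (\<bar>X x + Y x\<bar> powr r) \<le> norm (B x)"
      using le_B by (intro AE_I2) (smt (verit) powr_ge_zero real_norm_def)
  qed
  have "(\<integral>x. \<bar>X x + Y x\<bar> powr r \<partial>M) \<le> integral\<^sup>L M B"
    by (intro integral_mono int_sum int_B le_B)
  also have "\<dots> = (\<integral>x. \<bar>X x\<bar> powr r \<partial>M) + r * (\<integral>x. phi r (X x) * Y x \<partial>M)
      + 17 * (\<integral>x. \<bar>Y x\<bar> powr r \<partial>M)"
    unfolding B_def using int int_phi by simp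
  finally show "(\<integral>x. \<bar>X x + Y x\<bar> powr r \<partial>M) \<le> (\<integral>x. \<bar>X x\<bar> powr r \<partial>M) + 17 * (\<integral>x. \<bar>Y x\<bar> powr r \<partial>M)"
    using orth by simp
qed

lemma (in prob_space) moment_sum_orthogonal:
  fixes X :: "'a \<Rightarrow> real" and T :: "'i \<Rightarrow> 'a \<Rightarrow> real"
  assumes r: "1 < r" "r \<le> 2" and fin: "finite R"
    and X: "X \<in> borel_measurable M" "integrable M (\<lambda>x. \<bar>X x\<bar> powr r)"
    and T: "\<And>s. s \<in> R \<Longrightarrow> T s \<in> borel_measurable M \<and> integrable M (\<lambda>x. \<bar>T s x\<bar> powr r)"
    and orth: "\<And>R' s. R' \<subseteq> R \<Longrightarrow> s \<in> R \<Longrightarrow> s \<notin> R' \<Longrightarrow>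
      integrable M (\<lambda>x. \<bar>X x + (\<Sum>t\<in>R'. T t x)\<bar> powr r) \<Longrightarrow>
      (\<integral>x. phi r (X x + (\<Sum>t\<in>R'. T t x)) * T s x \<partial>M) = 0"
  shows "integrable M (\<lambda>x. \<bar>X x + (\<Sum>t\<in>R. T t x)\<bar> powr r) \<and>
    (\<integral>x. \<bar>X x + (\<Sum>t\<in>R. T t x)\<bar> powr r \<partial>M)
      \<le> (\<integral>x. \<bar>X x\<bar> powr r \<partial>M) + 17 * (\<Sum>t\<in>R. \<integral>x. \<bar>T t x\<bar> powr r \<partial>M)"
  using fin T orth
proof (induction R rule: finite_induct)
  case empty
  then show ?case using X by simp
next
  case (insert a F)
  define S where "S x = X x + (\<Sum>t\<in>F. T t x)" for x
  have T_F: "\<And>s. s \<in> F \<Longrightarrow> T s \<in> borel_measurable M \<and> integrable M (\<lambda>x. \<bar>T s x\<bar> powr r)"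
    using insert.prems(1) by blast
  have orth_F: "(\<integral>x. phi r (X x + (\<Sum>t\<in>R'. T t x)) * T s x \<partial>M) = 0"
    if "R' \<subseteq> F" "s \<in> F" "s \<notin> R'" "integrable M (\<lambda>x. \<bar>X x + (\<Sum>t\<in>R'. T t x)\<bar> powr r)" for R' s
    using that by (intro insert.prems(2)) auto
  have IH: "integrable M (\<lambda>x. \<bar>S x\<bar> powr r)"
    "(\<integral>x. \<bar>S x\<bar> powr r \<partial>M) \<le> (\<integral>x. \<bar>X x\<bar> powr r \<partial>M) + 17 * (\<Sum>t\<in>F. \<integral>x. \<bar>T t x\<bar> powr r \<partial>M)"
    using insert.IH[OF T_F orth_F] unfolding S_def by blast+
  have S_meas: "S \<in> borel_measurable M"
    unfolding S_def using X T_F by (intro borel_measurable_add borel_measurable_sum) auto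
  have orth_a: "(\<integral>x. phi r (S x) * T a x \<partial>M) = 0"
    using IH(1) insert.hyps unfolding S_def by (intro insert.prems(2)) auto
  have T_a: "T a \<in> borel_measurable M" "integrable M (\<lambda>x. \<bar>T a x\<bar> powr r)"
    using insert.prems(1) by auto
  note step = moment_add_orthogonal[OF r S_meas T_a(1) IH(1) T_a(2) orth_a]
  have split: "X x + (\<Sum>t\<in>insert a F. T t x) = S x + T a x" for x
    using insert.hyps by (simp add: S_def)
  show ?case unfolding split using step IH(2) insert.hyps by (simp add: algebra_simps)
qed

lemma finite_words: "finite {w::bool list. length w = n}"
  using finite_lists_length_eq[of "UNIV::bool set" n] by simp

lemma card_words: "card {w::bool list. length w = n} = 2 ^ n"
  using card_lists_length_eq[of "UNIV::bool set" n] by simp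

lemma sum_words_Suc:
  fixes f :: "bool list \<Rightarrow> 'b::comm_monoid_add"
  shows "(\<Sum>w | length w = Suc k. f w) = (\<Sum>s | length s = k. f (s @ [False]) + f (s @ [True]))"
proof -
  let ?L = "{s::bool list. length s = k}"
  have words_eq: "{w::bool list. length w = Suc k} = (\<lambda>s. s @ [False]) ` ?L \<union> (\<lambda>s. s @ [True]) ` ?L"
  proof (intro set_eqI iffI)
    fix w :: "bool list" assume w: "w \<in> {w. length w = Suc k}"
    then have "w = butlast w @ [last w]" "length (butlast w) = k"
      by (auto intro!: append_butlast_last_id[symmetric])
    then obtain s b where "w = s @ [b]" "length s = k" by blast
    then show "w \<in> (\<lambda>s. s @ [False]) ` ?L \<union> (\<lambda>s. s @ [True]) ` ?L" by (cases b) auto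
  qed auto
  have "(\<Sum>w | length w = Suc k. f w)
      = (\<Sum>w\<in>(\<lambda>s. s @ [False]) ` ?L. f w) + (\<Sum>w\<in>(\<lambda>s. s @ [True]) ` ?L. f w)"
    unfolding words_eq by (rule sum.union_disjoint) (use finite_words in auto)
  also have "\<dots> = (\<Sum>s\<in>?L. f (s @ [False])) + (\<Sum>s\<in>?L. f (s @ [True]))"
    by (subst (1 2) sum.reindex) (auto simp: inj_on_def)
  finally show ?thesis by (simp add: sum.distrib)
qed

text \<open>The probabilistic setting of the theorem.\<close>

locale cascade = prob_space M
  for M :: "'a measure" +
  fixes W Z :: "'a \<Rightarrow> real"
    and Wf Zf :: "nat \<Rightarrow> bool list \<Rightarrow> 'a \<Rightarrow> real"
    and p \<epsilon> :: real
  assumes W_rv: "W \<in> borel_measurable M"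
    and W_pos: "AE x in M. W x > 0"
    and W_moments: "\<And>q::real. integrable M (\<lambda>x. W x powr q)"
    and Wf_rv: "\<And>m r. r \<noteq> [] \<Longrightarrow> Wf m r \<in> borel_measurable M"
    and Wf_law: "\<And>m r. r \<noteq> [] \<Longrightarrow> distr M borel (Wf m r) = distr M borel W"
    and Wf_indep: "indep_vars (\<lambda>_. borel) (\<lambda>(m, r). Wf m r) {(m, r). r \<noteq> []}"
    and Z_rv: "Z \<in> borel_measurable M"
    and Zf_meas: "\<And>m r. measurable_wrt M (Zf m r) (\<lambda>r'. Wf m (r @ r')) {r'. r' \<noteq> []}"
    and Zf_law: "\<And>m r. distr M borel (Zf m r) = distr M borel Z"
    and eps: "0 < \<epsilon>" "\<epsilon> \<le> 1"
    and Z_mom: "integrable M (\<lambda>x. \<bar>Z x\<bar> powr (1 + \<epsilon>))"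
begin

text \<open>Independence of the weights makes these sigma-algebras independent for
  disjoint sets of words; this is the only form in which independence is used.\<close>

definition NE :: "bool list set" where "NE = {w. w \<noteq> []}"

definition gen :: "nat \<Rightarrow> bool list \<Rightarrow> 'a set set" where
  "gen m w = {Wf m w -` B \<inter> space M | B. B \<in> sets borel}"

definition sigW :: "nat \<Rightarrow> bool list set \<Rightarrow> 'a measure" where
  "sigW m A = sigma (space M) (\<Union>w\<in>A. gen m w)"

lemma gen_Pow: "(\<Union>w\<in>A. gen m w) \<subseteq> Pow (space M)"
  by (auto simp: gen_def)

lemma sets_sigW: "sets (sigW m A) = sigma_sets (space M) (\<Union>w\<in>A. gen m w)"
  unfolding sigW_def using gen_Pow by (rule sets_measure_of)

lemma space_sigW[simp]: "space (sigW m A) = space M"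
  unfolding sigW_def using gen_Pow by (rule space_measure_of)

lemma sigW_measurable:
  assumes "A \<subseteq> NE" "f \<in> borel_measurable (sigW m A)"
  shows "f \<in> borel_measurable M"
proof -
  have "(\<Union>w\<in>A. gen m w) \<subseteq> sets M"
    using assms(1) Wf_rv unfolding gen_def NE_def by (auto simp: measurable_sets)
  then have "sets (sigW m A) \<subseteq> sets M" unfolding sets_sigW by (rule sets.sigma_sets_subset)
  then show ?thesis using assms(2) unfolding measurable_def by auto
qed

lemma sigW_mono:
  assumes "A \<subseteq> B" "f \<in> borel_measurable (sigW m A)"
  shows "f \<in> borel_measurable (sigW m B)"
proof -
  have "sets (sigW m A) \<subseteq> sets (sigW m B)" unfolding sets_sigW
    using assms(1) by (intro sigma_sets_mono') auto
  then show ?thesis using assms(2) unfolding measurable_def by auto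
qed

lemma Wf_sigW: assumes "w \<in> A" shows "Wf m w \<in> borel_measurable (sigW m A)"
proof (rule measurableI)
  fix B :: "real set" assume "B \<in> sets borel"
  then have "Wf m w -` B \<inter> space M \<in> (\<Union>w\<in>A. gen m w)" using assms unfolding gen_def by auto
  then show "Wf m w -` B \<inter> space (sigW m A) \<in> sets (sigW m A)" unfolding sets_sigW by auto
qed auto

definition desc :: "bool list \<Rightarrow> bool list set" where
  "desc r = {r @ v | v. v \<noteq> []}"

lemma desc_NE: "desc r \<subseteq> NE" by (auto simp: desc_def NE_def)

lemma Zf_sigW: "Zf m r \<in> borel_measurable (sigW m (desc r))"
proof (rule measurableI)
  fix B :: "real set" assume B: "B \<in> sets borel"
  have gen_eq: "(\<Union>i\<in>{r'. r' \<noteq> []}. {(\<lambda>r'. Wf m (r @ r')) i -` B \<inter> space M |B. B \<in> sets borel})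
     = (\<Union>w\<in>desc r. gen m w)" unfolding desc_def gen_def by blast
  show "Zf m r -` B \<inter> space (sigW m (desc r)) \<in> sets (sigW m (desc r))"
    using Zf_meas[of m r] B unfolding measurable_wrt_def sets_sigW gen_eq by auto
qed auto

lemma indep_sets_sigW:
  assumes AB: "A \<inter> B = {}" "A \<subseteq> NE" "B \<subseteq> NE"
  shows "indep_sets (\<lambda>b. sigma_sets (space M) (\<Union>w\<in>(if b then A else B). gen m w)) UNIV"
proof -
  define E where "E i = {(\<lambda>(m, r). Wf m r) i -` C \<inter> space M | C. C \<in> sets borel}"
    for i :: "nat \<times> bool list"
  define I where "I b = (\<lambda>w. (m, w)) ` (if b then A else B)" for b
  have ind: "indep_sets E {(m, r). r \<noteq> []}" using Wf_indep unfolding indep_vars_def2 E_def by auto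
  have "indep_sets (\<lambda>j. sigma_sets (space M) (\<Union>i\<in>I j. E i)) UNIV"
  proof (rule indep_sets_collect_sigma)
    show "indep_sets E (\<Union>j\<in>UNIV. I j)"
      by (rule indep_sets_mono_index[OF _ ind]) (use AB in \<open>auto simp: I_def NE_def split: if_splits\<close>)
  next
    fix i :: "nat \<times> bool list"
    show "Int_stable (E i)"
    proof (rule Int_stableI)
      fix a b assume "a \<in> E i" "b \<in> E i"
      then obtain C D where "C \<in> sets borel" "D \<in> sets borel"
        "a = (\<lambda>(m, r). Wf m r) i -` C \<inter> space M" "b = (\<lambda>(m, r). Wf m r) i -` D \<inter> space M"
        unfolding E_def by blast
      then show "a \<inter> b \<in> E i" unfolding E_def by (intro CollectI exI[of _ "C \<inter> D"]) auto
    qed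
  next
    show "disjoint_family_on I UNIV"
      using AB by (auto simp: disjoint_family_on_def I_def)
  qed
  moreover have "(\<Union>i\<in>I j. E i) = (\<Union>w\<in>(if j then A else B). gen m w)" for j
    unfolding I_def E_def gen_def by auto
  ultimately show ?thesis by simp
qed

lemma indep_var_sigW:
  fixes X Y :: "'a \<Rightarrow> real"
  assumes AB: "A \<inter> B = {}" "A \<subseteq> NE" "B \<subseteq> NE"
    and X: "X \<in> borel_measurable (sigW m A)" and Y: "Y \<in> borel_measurable (sigW m B)"
  shows "indep_var borel X borel Y"
  unfolding indep_var_def indep_vars_def2
proof (intro conjI ballI)
  fix i :: bool show "random_variable (case_bool borel borel i) (case_bool X Y i)"
    using sigW_measurable[OF AB(2) X] sigW_measurable[OF AB(3) Y] by (cases i) auto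
next
  show "indep_sets (\<lambda>i. {case_bool X Y i -` C \<inter> space M |C. C \<in> sets (case_bool borel borel i)}) UNIV"
  proof (rule indep_sets_mono_sets[OF indep_sets_sigW[OF AB]])
    fix i :: bool
    show "{case_bool X Y i -` C \<inter> space M |C. C \<in> sets (case_bool borel borel i)}
      \<subseteq> sigma_sets (space M) (\<Union>w\<in>(if i then A else B). gen m w)"
      using measurable_sets[OF X] measurable_sets[OF Y] unfolding sets_sigW by (cases i) auto
  qed
qed

lemma integral_mult_sigW:
  fixes X Y :: "'a \<Rightarrow> real"
  assumes AB: "A \<inter> B = {}" "A \<subseteq> NE" "B \<subseteq> NE"
    and X: "X \<in> borel_measurable (sigW m A)" and Y: "Y \<in> borel_measurable (sigW m B)"
    and int: "integrable M X" "integrable M Y"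
  shows "integrable M (\<lambda>x. X x * Y x)" "(\<integral>x. X x * Y x \<partial>M) = (\<integral>x. X x \<partial>M) * (\<integral>x. Y x \<partial>M)"
  using indep_var_integrable[OF indep_var_sigW[OF AB X Y] int]
    indep_var_lebesgue_integral[OF indep_var_sigW[OF AB X Y] int] by auto

abbreviation kappa :: real where "kappa \<equiv> 1 + \<epsilon>"

lemma kappa_bounds: "1 < kappa" "kappa \<le> 2" using eps by auto

definition levels :: "nat \<Rightarrow> bool list set" where
  "levels k = {w. w \<noteq> [] \<and> length w \<le> k}"

lemma levels_NE: "levels k \<subseteq> NE" by (auto simp: levels_def NE_def)

definition EW :: "real \<Rightarrow> real" where
  "EW a = (\<integral>x. W x powr a \<partial>M)"

lemma EW_nonneg: "0 \<le> EW a" unfolding EW_def by (intro integral_nonneg_AE) auto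

lemma EW_pos: "0 < EW a"
proof -
  have "EW a \<noteq> 0"
  proof
    assume "EW a = 0"
    then have "AE x in M. W x powr a = 0"
      using integral_nonneg_eq_0_iff_AE[OF W_moments[of a]] unfolding EW_def by auto
    with W_pos have "AE x in M. False" by eventually_elim simp
    then show False by simp
  qed
  then show ?thesis using EW_nonneg[of a] by simp
qed

lemma Wf_moment:
  assumes "w \<noteq> []"
  shows "integrable M (\<lambda>x. Wf m w x powr a)" "(\<integral>x. Wf m w x powr a \<partial>M) = EW a"
proof -
  have meas: "Wf m w \<in> borel_measurable M" using Wf_rv assms .
  have f: "(\<lambda>y::real. y powr a) \<in> borel_measurable borel" by measurable
  have "integrable (distr M borel (Wf m w)) (\<lambda>y. y powr a)"
    unfolding Wf_law[OF assms] using W_moments[of a] integrable_distr_eq[OF W_rv f] by simp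
  then show "integrable M (\<lambda>x. Wf m w x powr a)" using integrable_distr_eq[OF meas f] by simp
  have "(\<integral>x. Wf m w x powr a \<partial>M) = integral\<^sup>L (distr M borel (Wf m w)) (\<lambda>y. y powr a)"
    using integral_distr[OF meas f] by simp
  also have "\<dots> = integral\<^sup>L (distr M borel W) (\<lambda>y. y powr a)" unfolding Wf_law[OF assms] ..
  also have "\<dots> = EW a" unfolding EW_def using integral_distr[OF W_rv f] by simp
  finally show "(\<integral>x. Wf m w x powr a \<partial>M) = EW a" .
qed

definition Q :: "nat \<Rightarrow> bool list \<Rightarrow> real \<Rightarrow> 'a \<Rightarrow> real" where
  "Q m s a x = (\<Prod>i\<in>{1..length s}. Wf m (take i s) x powr a)"

lemma Q_Nil[simp]: "Q m [] a x = 1" by (simp add: Q_def)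

lemma Q_snoc: "Q m (s @ [b]) a x = Q m s a x * Wf m (s @ [b]) x powr a"
proof -
  have "{1..length (s @ [b])} = insert (Suc (length s)) {1..length s}" by auto
  moreover have "(\<Prod>i\<in>{1..length s}. Wf m (take i (s @ [b])) x powr a)
      = (\<Prod>i\<in>{1..length s}. Wf m (take i s) x powr a)"
    by (intro prod.cong) auto
  ultimately show ?thesis unfolding Q_def by (simp add: mult.commute)
qed

lemma Q_nonneg: "0 \<le> Q m s a x" unfolding Q_def by (intro prod_nonneg) auto

lemma Q_powr: "Q m s a x powr b = Q m s (a * b) x"
  unfolding Q_def prod_powr_distrib powr_powr ..

lemma Q_sigW: "Q m s a \<in> borel_measurable (sigW m (levels (length s)))"
  unfolding Q_def
proof (intro borel_measurable_prod powr_real_measurable)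
  fix i assume "i \<in> {1..length s}"
  then show "Wf m (take i s) \<in> borel_measurable (sigW m (levels (length s)))"
    by (intro Wf_sigW) (auto simp: levels_def)
qed auto

lemma Q_measurable: "Q m s a \<in> borel_measurable M"
  using sigW_measurable[OF levels_NE Q_sigW] .

text \<open>The weights along a path are independent, so the moments of \<open>Q\<close> factorise.\<close>

lemma Q_moment: "integrable M (Q m s a) \<and> (\<integral>x. Q m s a x \<partial>M) = EW a ^ length s"
proof (induction s rule: rev_induct)
  case Nil
  then show ?case by (simp add: prob_space)
next
  case (snoc b s)
  have disj: "levels (length s) \<inter> {s @ [b]} = {}" by (auto simp: levels_def)
  have new: "{s @ [b]} \<subseteq> NE" by (auto simp: NE_def)
  have last_sigW: "(\<lambda>x. Wf m (s @ [b]) x powr a) \<in> borel_measurable (sigW m {s @ [b]})"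
    using Wf_sigW[of "s @ [b]" "{s @ [b]}" m] by (intro powr_real_measurable) auto
  note factor = integral_mult_sigW[OF disj levels_NE new Q_sigW last_sigW
      conjunct1[OF snoc.IH] Wf_moment(1)]
  have Q_eq: "(\<lambda>x. Q m s a x * Wf m (s @ [b]) x powr a) = Q m (s @ [b]) a"
    by (simp add: Q_snoc fun_eq_iff)
  show ?case using factor Wf_moment(2)[of "s @ [b]" m a] snoc.IH unfolding Q_eq by simp
qed

lemma Q_moment_kappa:
  "integrable M (\<lambda>x. \<bar>Q m s p x\<bar> powr kappa)"
  "(\<integral>x. \<bar>Q m s p x\<bar> powr kappa \<partial>M) = EW (p * kappa) ^ length s"
  using Q_moment[of m s "p * kappa"] by (simp_all add: Q_nonneg Q_powr)

definition incr :: "nat \<Rightarrow> real \<Rightarrow> (bool list \<Rightarrow> 'a \<Rightarrow> real) \<Rightarrow> bool list \<Rightarrow> 'a \<Rightarrow> real" where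
  "incr m c D s x = c * Q m s p x * D s x"

context
  fixes m k :: nat and A :: "bool list \<Rightarrow> bool list set" and D :: "bool list \<Rightarrow> 'a \<Rightarrow> real"
  assumes A_NE: "\<And>t. A t \<subseteq> NE"
    and A_new: "\<And>t. length t = k \<Longrightarrow> levels k \<inter> A t = {}"
    and A_disj: "\<And>t t'. length t = k \<Longrightarrow> length t' = k \<Longrightarrow> t \<noteq> t' \<Longrightarrow> A t \<inter> A t' = {}"
    and D_sigW: "\<And>t. D t \<in> borel_measurable (sigW m (A t))"
begin

lemma incr_moment:
  assumes s: "length s = k" and D_int: "integrable M (\<lambda>x. \<bar>D s x\<bar> powr kappa)"
  shows "incr m c D s \<in> borel_measurable M"
    "integrable M (\<lambda>x. \<bar>incr m c D s x\<bar> powr kappa)"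
    "(\<integral>x. \<bar>incr m c D s x\<bar> powr kappa \<partial>M)
       = \<bar>c\<bar> powr kappa * EW (p * kappa) ^ k * (\<integral>x. \<bar>D s x\<bar> powr kappa \<partial>M)"
proof -
  have Q_pow: "(\<lambda>x. \<bar>Q m s p x\<bar> powr kappa) \<in> borel_measurable (sigW m (levels k))"
    using Q_sigW[of m s p] s by (intro measurable_abs_powr) auto
  have D_pow: "(\<lambda>x. \<bar>D s x\<bar> powr kappa) \<in> borel_measurable (sigW m (A s))"
    using D_sigW by (intro measurable_abs_powr)
  note factor = integral_mult_sigW[OF A_new[OF s] levels_NE A_NE Q_pow D_pow Q_moment_kappa(1) D_int]
  have split: "\<bar>incr m c D s x\<bar> powr kappa = \<bar>c\<bar> powr kappa * (\<bar>Q m s p x\<bar> powr kappa * \<bar>D s x\<bar> powr kappa)" for x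
    unfolding incr_def by (simp add: abs_mult powr_mult)
  show "incr m c D s \<in> borel_measurable M"
    unfolding incr_def using Q_measurable sigW_measurable[OF A_NE D_sigW] by measurable
  show "integrable M (\<lambda>x. \<bar>incr m c D s x\<bar> powr kappa)" unfolding split using factor(1) by auto
  show "(\<integral>x. \<bar>incr m c D s x\<bar> powr kappa \<partial>M)
       = \<bar>c\<bar> powr kappa * EW (p * kappa) ^ k * (\<integral>x. \<bar>D s x\<bar> powr kappa \<partial>M)"
    unfolding split using factor(2) Q_moment_kappa(2)[of m s] s by simp
qed

text \<open>An increment is orthogonal to every function of the first \<open>k\<close> levels and of the other
  increments, since its centred factor \<open>D s\<close> is independent of all of them.\<close>

lemma incr_orthogonal:
  assumes R': "R' \<subseteq> {t. length t = k}" and s: "length s = k" "s \<notin> R'"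
    and D_centred: "integrable M (D s)" "(\<integral>x. D s x \<partial>M) = 0"
    and X_sigW: "X \<in> borel_measurable (sigW m (levels k))"
    and int: "integrable M (\<lambda>x. \<bar>X x + (\<Sum>t\<in>R'. incr m c D t x)\<bar> powr kappa)"
  shows "(\<integral>x. phi kappa (X x + (\<Sum>t\<in>R'. incr m c D t x)) * incr m c D s x \<partial>M) = 0"
proof -
  define B where "B = levels k \<union> (\<Union>t\<in>R'. A t)"
  define S where "S x = X x + (\<Sum>t\<in>R'. incr m c D t x)" for x
  have B_NE: "B \<subseteq> NE" unfolding B_def using levels_NE A_NE by auto
  have disj: "B \<inter> A s = {}"
    unfolding B_def using A_new[OF s(1)] A_disj[OF s(1)] R' s(2) by fastforce
  have Q_B: "Q m t p \<in> borel_measurable (sigW m B)" if "length t = k" for t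
  proof (rule sigW_mono)
    show "Q m t p \<in> borel_measurable (sigW m (levels k))" using Q_sigW[of m t p] that by simp
  qed (auto simp: B_def)
  have S_B: "S \<in> borel_measurable (sigW m B)"
    unfolding S_def incr_def
  proof (intro borel_measurable_add borel_measurable_sum borel_measurable_times borel_measurable_const)
    show "X \<in> borel_measurable (sigW m B)" by (rule sigW_mono[OF _ X_sigW]) (auto simp: B_def)
    fix t assume t: "t \<in> R'"
    show "Q m t p \<in> borel_measurable (sigW m B)" using Q_B t R' by auto
    show "D t \<in> borel_measurable (sigW m B)" by (rule sigW_mono[OF _ D_sigW]) (use t in \<open>auto simp: B_def\<close>)
  qed
  have phi_Q_B: "(\<lambda>x. phi kappa (S x) * Q m s p x) \<in> borel_measurable (sigW m B)"
    using S_B Q_B[OF s(1)] by measurable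
  have phi_Q_int: "integrable M (\<lambda>x. phi kappa (S x) * Q m s p x)"
    using integrable_phi_mult[OF kappa_bounds(1) sigW_measurable[OF B_NE S_B] Q_measurable
        int[folded S_def] Q_moment_kappa(1)] .
  have "(\<integral>x. phi kappa (S x) * incr m c D s x \<partial>M) = c * (\<integral>x. (phi kappa (S x) * Q m s p x) * D s x \<partial>M)"
    unfolding incr_def by (simp add: mult_ac)
  also have "\<dots> = c * ((\<integral>x. phi kappa (S x) * Q m s p x \<partial>M) * (\<integral>x. D s x \<partial>M))"
    using integral_mult_sigW(2)[OF disj B_NE A_NE phi_Q_B D_sigW phi_Q_int D_centred(1)] by simp
  finally show ?thesis using D_centred(2) unfolding S_def by simp
qed

lemma incr_sum_moment:
  assumes D_centred: "\<And>t. length t = k \<Longrightarrow> integrable M (D t) \<and> (\<integral>x. D t x \<partial>M) = 0"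
    and D_moment: "\<And>t. length t = k \<Longrightarrow>
      integrable M (\<lambda>x. \<bar>D t x\<bar> powr kappa) \<and> (\<integral>x. \<bar>D t x\<bar> powr kappa \<partial>M) \<le> K"
    and X_sigW: "X \<in> borel_measurable (sigW m (levels k))"
    and X_moment: "integrable M (\<lambda>x. \<bar>X x\<bar> powr kappa)"
  shows "integrable M (\<lambda>x. \<bar>X x + (\<Sum>t | length t = k. incr m c D t x)\<bar> powr kappa) \<and>
    (\<integral>x. \<bar>X x + (\<Sum>t | length t = k. incr m c D t x)\<bar> powr kappa \<partial>M)
      \<le> (\<integral>x. \<bar>X x\<bar> powr kappa \<partial>M) + 17 * (2 ^ k * (\<bar>c\<bar> powr kappa * EW (p * kappa) ^ k * K))"
proof -
  have chain: "integrable M (\<lambda>x. \<bar>X x + (\<Sum>t | length t = k. incr m c D t x)\<bar> powr kappa) \<and>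
    (\<integral>x. \<bar>X x + (\<Sum>t | length t = k. incr m c D t x)\<bar> powr kappa \<partial>M)
      \<le> (\<integral>x. \<bar>X x\<bar> powr kappa \<partial>M) + 17 * (\<Sum>t | length t = k. \<integral>x. \<bar>incr m c D t x\<bar> powr kappa \<partial>M)"
  proof (rule moment_sum_orthogonal[OF kappa_bounds finite_words
        sigW_measurable[OF levels_NE X_sigW] X_moment])
    show "incr m c D s \<in> borel_measurable M \<and> integrable M (\<lambda>x. \<bar>incr m c D s x\<bar> powr kappa)"
      if "s \<in> {t. length t = k}" for s
      using incr_moment that D_moment by auto
    show "(\<integral>x. phi kappa (X x + (\<Sum>t\<in>R'. incr m c D t x)) * incr m c D s x \<partial>M) = 0"
      if "R' \<subseteq> {t. length t = k}" "s \<in> {t. length t = k}" "s \<notin> R'"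
        "integrable M (\<lambda>x. \<bar>X x + (\<Sum>t\<in>R'. incr m c D t x)\<bar> powr kappa)" for R' s
      using that D_centred[of s] by (intro incr_orthogonal X_sigW) auto
  qed
  have "(\<Sum>t | length t = k. \<integral>x. \<bar>incr m c D t x\<bar> powr kappa \<partial>M)
      \<le> (\<Sum>t::bool list | length t = k. \<bar>c\<bar> powr kappa * EW (p * kappa) ^ k * K)"
  proof (intro sum_mono)
    fix t :: "bool list" assume "t \<in> {t. length t = k}"
    then show "(\<integral>x. \<bar>incr m c D t x\<bar> powr kappa \<partial>M) \<le> \<bar>c\<bar> powr kappa * EW (p * kappa) ^ k * K"
      using incr_moment(3)[of t] D_moment[of t] EW_nonneg by (auto intro!: mult_left_mono)
  qed
  also have "\<dots> = 2 ^ k * (\<bar>c\<bar> powr kappa * EW (p * kappa) ^ k * K)" by (simp add: card_words)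
  finally show ?thesis using chain by linarith
qed

end

definition e :: real where "e = EW p"

lemma e_pos: "0 < e" unfolding e_def by (rule EW_pos)

definition children :: "bool list \<Rightarrow> bool list set" where
  "children s = {s @ [False], s @ [True]}"

definition U :: "nat \<Rightarrow> bool list \<Rightarrow> 'a \<Rightarrow> real" where
  "U m s x = Wf m (s @ [False]) x powr p + Wf m (s @ [True]) x powr p - 2 * e"

definition KU :: real where "KU = 9 * (2 * EW (p * kappa) + \<bar>2 * e\<bar> powr kappa)"

lemma children_NE: "children s \<subseteq> NE" by (auto simp: children_def NE_def)

lemma U_sigW: "U m s \<in> borel_measurable (sigW m (children s))"
  unfolding U_def using Wf_sigW[of "s @ [False]" "children s" m] Wf_sigW[of "s @ [True]" "children s" m]
  by (intro borel_measurable_diff borel_measurable_add powr_real_measurable) (auto simp: children_def)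

lemma U_centred: "integrable M (U m s) \<and> (\<integral>x. U m s x \<partial>M) = 0"
  using Wf_moment[of "s @ [False]" m p] Wf_moment[of "s @ [True]" m p]
  unfolding U_def by (simp add: e_def prob_space)

lemma U_moment: "integrable M (\<lambda>x. \<bar>U m s x\<bar> powr kappa) \<and> (\<integral>x. \<bar>U m s x\<bar> powr kappa \<partial>M) \<le> KU"
proof
  let ?W0 = "\<lambda>x. Wf m (s @ [False]) x powr (p * kappa)" and ?W1 = "\<lambda>x. Wf m (s @ [True]) x powr (p * kappa)"
  define B where "B x = 9 * (?W0 x + ?W1 x + \<bar>2 * e\<bar> powr kappa)" for x
  have int_B: "integrable M B" unfolding B_def using Wf_moment(1) by auto
  have le_B: "\<bar>U m s x\<bar> powr kappa \<le> B x" for x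
    unfolding U_def B_def
    using abs_diff3_powr_le[OF kappa_bounds, of "Wf m (s @ [False]) x powr p" "Wf m (s @ [True]) x powr p" "2 * e"]
    by (simp add: powr_powr)
  show int: "integrable M (\<lambda>x. \<bar>U m s x\<bar> powr kappa)"
  proof (rule Bochner_Integration.integrable_bound[OF int_B])
    show "(\<lambda>x. \<bar>U m s x\<bar> powr kappa) \<in> borel_measurable M"
      using sigW_measurable[OF children_NE U_sigW] by measurable
    show "AE x in M. norm (\<bar>U m s x\<bar> powr kappa) \<le> norm (B x)"
      using le_B by (intro AE_I2) (smt (verit) powr_ge_zero real_norm_def)
  qed
  have "(\<integral>x. \<bar>U m s x\<bar> powr kappa \<partial>M) \<le> integral\<^sup>L M B" by (intro integral_mono int int_B le_B)
  also have "\<dots> = KU"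
    unfolding B_def KU_def using Wf_moment[of "s @ [False]" m "p * kappa"] Wf_moment[of "s @ [True]" m "p * kappa"]
    by (simp add: prob_space)
  finally show "(\<integral>x. \<bar>U m s x\<bar> powr kappa \<partial>M) \<le> KU" .
qed

definition mu :: real where "mu = (\<integral>x. Z x \<partial>M)"

definition Zc :: "nat \<Rightarrow> bool list \<Rightarrow> 'a \<Rightarrow> real" where
  "Zc m r x = Zf m r x - mu"

definition KZ :: real where "KZ = (\<integral>x. \<bar>Z x - mu\<bar> powr kappa \<partial>M)"

lemma Zc_sigW: "Zc m r \<in> borel_measurable (sigW m (desc r))"
  unfolding Zc_def using Zf_sigW by measurable

lemma Zf_transfer:
  fixes f :: "real \<Rightarrow> real"
  assumes f: "f \<in> borel_measurable borel"
  shows "integrable M (\<lambda>x. f (Zf m r x)) \<longleftrightarrow> integrable M (\<lambda>x. f (Z x))"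
    "(\<integral>x. f (Zf m r x) \<partial>M) = (\<integral>x. f (Z x) \<partial>M)"
proof -
  have meas: "Zf m r \<in> borel_measurable M" using sigW_measurable[OF desc_NE Zf_sigW] .
  show "integrable M (\<lambda>x. f (Zf m r x)) \<longleftrightarrow> integrable M (\<lambda>x. f (Z x))"
    using integrable_distr_eq[OF meas f] integrable_distr_eq[OF Z_rv f] Zf_law[of m r] by simp
  show "(\<integral>x. f (Zf m r x) \<partial>M) = (\<integral>x. f (Z x) \<partial>M)"
    using integral_distr[OF meas f] integral_distr[OF Z_rv f] Zf_law[of m r] by simp
qed

lemma Z_integrable: "integrable M Z"
proof (rule Bochner_Integration.integrable_bound)
  show "integrable M (\<lambda>x. 1 + \<bar>Z x\<bar> powr kappa)" using Z_mom by auto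
  show "AE x in M. norm (Z x) \<le> norm (1 + \<bar>Z x\<bar> powr kappa)"
    using abs_le_one_plus_powr[of kappa] kappa_bounds by (auto intro!: AE_I2)
qed (rule Z_rv)

lemma Zc_centred: "integrable M (Zc m r) \<and> (\<integral>x. Zc m r x \<partial>M) = 0"
  using Zf_transfer[of "\<lambda>y. y" m r] Z_integrable unfolding Zc_def by (simp add: mu_def prob_space)

lemma Zc_moment: "integrable M (\<lambda>x. \<bar>Zc m r x\<bar> powr kappa) \<and> (\<integral>x. \<bar>Zc m r x\<bar> powr kappa \<partial>M) \<le> KZ"
proof -
  have f: "(\<lambda>y. \<bar>y - mu\<bar> powr kappa) \<in> borel_measurable borel" by measurable
  have "integrable M (\<lambda>x. \<bar>Z x - mu\<bar> powr kappa)"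
  proof (rule Bochner_Integration.integrable_bound)
    show "integrable M (\<lambda>x. 9 * (\<bar>Z x\<bar> powr kappa + \<bar>0\<bar> powr kappa + \<bar>mu\<bar> powr kappa))"
      using Z_mom by auto
    show "AE x in M. norm (\<bar>Z x - mu\<bar> powr kappa)
        \<le> norm (9 * (\<bar>Z x\<bar> powr kappa + \<bar>0\<bar> powr kappa + \<bar>mu\<bar> powr kappa))"
      using abs_diff3_powr_le[OF kappa_bounds, of _ 0 mu] by (auto intro!: AE_I2)
  qed (use Z_rv in measurable)
  then show ?thesis using Zf_transfer[OF f, of m r] unfolding Zc_def KZ_def by simp
qed

text \<open>The martingale decomposition of the cascade: \<open>mart m j k\<close> is the conditional expectation
  of \<open>cascM Wf Zf m j p\<close> given the first \<open>k\<close> levels.\<close>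

definition mart_coeff :: "nat \<Rightarrow> nat \<Rightarrow> real" where
  "mart_coeff j k = 2 powr (- real j * p) * (2 * e) ^ (j - k) * mu"

definition mart :: "nat \<Rightarrow> nat \<Rightarrow> nat \<Rightarrow> 'a \<Rightarrow> real" where
  "mart m j k x = mart_coeff j k * (\<Sum>s | length s = k. Q m s p x)"

lemma mart_0: "mart m j 0 x = mart_coeff j 0"
proof -
  have "{s::bool list. length s = 0} = {[]}" by auto
  then show ?thesis unfolding mart_def by simp
qed

lemma mart_sigW: "mart m j k \<in> borel_measurable (sigW m (levels k))"
  unfolding mart_def using Q_sigW by (intro borel_measurable_times borel_measurable_const borel_measurable_sum) auto

lemma mart_Suc:
  assumes "k < j"
  shows "mart m j (Suc k) x = mart m j k x + (\<Sum>s | length s = k. incr m (mart_coeff j (Suc k)) (U m) s x)"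
proof -
  have "j - k = Suc (j - Suc k)" using assms by simp
  then have c: "mart_coeff j k = mart_coeff j (Suc k) * (2 * e)" unfolding mart_coeff_def by simp
  have "(\<Sum>w | length w = Suc k. Q m w p x) = (\<Sum>s | length s = k. Q m s p x * U m s x + (2 * e) * Q m s p x)"
    unfolding sum_words_Suc Q_snoc U_def by (intro sum.cong) (auto simp: algebra_simps)
  then show ?thesis unfolding mart_def incr_def c
    by (simp add: sum.distrib sum_distrib_left algebra_simps)
qed

lemma cascM_eq: "cascM Wf Zf m j p x = mart m j j x + (\<Sum>r | length r = j. incr m (2 powr (- real j * p)) (Zc m) r x)"
  unfolding cascM_def mart_def incr_def mart_coeff_def Q_def Zc_def
  by (simp add: sum_distrib_left sum.distrib[symmetric] algebra_simps)

lemma levels_children_disjoint: "length t = k \<Longrightarrow> levels k \<inter> children t = {}"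
  by (auto simp: levels_def children_def)

lemma children_disjoint: "t \<noteq> t' \<Longrightarrow> children t \<inter> children t' = {}"
  by (auto simp: children_def)

lemma levels_desc_disjoint: "length t = k \<Longrightarrow> levels k \<inter> desc t = {}"
  by (auto simp: levels_def desc_def)

lemma desc_disjoint:
  assumes "length t = k" "length t' = k" "t \<noteq> t'"
  shows "desc t \<inter> desc t' = {}"
proof -
  have "t @ v \<noteq> t' @ v'" for v v' using assms by (auto simp: append_eq_append_conv)
  then show ?thesis by (auto simp: desc_def)
qed

lemma mart_moment:
  assumes "k \<le> j"
  shows "integrable M (\<lambda>x. \<bar>mart m j k x\<bar> powr kappa) \<and>
    (\<integral>x. \<bar>mart m j k x\<bar> powr kappa \<partial>M)
      \<le> \<bar>mart_coeff j 0\<bar> powr kappa + 17 * (\<Sum>i<k. 2 ^ i * (\<bar>mart_coeff j (Suc i)\<bar> powr kappa * EW (p * kappa) ^ i * KU))"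
  using assms
proof (induction k)
  case 0
  then show ?case by (simp add: mart_0 prob_space)
next
  case (Suc k)
  then have IH: "integrable M (\<lambda>x. \<bar>mart m j k x\<bar> powr kappa)"
    "(\<integral>x. \<bar>mart m j k x\<bar> powr kappa \<partial>M)
      \<le> \<bar>mart_coeff j 0\<bar> powr kappa + 17 * (\<Sum>i<k. 2 ^ i * (\<bar>mart_coeff j (Suc i)\<bar> powr kappa * EW (p * kappa) ^ i * KU))"
    by auto
  have step: "integrable M (\<lambda>x. \<bar>mart m j (Suc k) x\<bar> powr kappa) \<and>
    (\<integral>x. \<bar>mart m j (Suc k) x\<bar> powr kappa \<partial>M)
      \<le> (\<integral>x. \<bar>mart m j k x\<bar> powr kappa \<partial>M)
        + 17 * (2 ^ k * (\<bar>mart_coeff j (Suc k)\<bar> powr kappa * EW (p * kappa) ^ k * KU))"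
    unfolding mart_Suc[OF Suc_le_lessD[OF Suc.prems]]
    by (rule incr_sum_moment[where A = children])
      (rule children_NE levels_children_disjoint children_disjoint U_sigW U_centred U_moment
        mart_sigW IH(1) | assumption)+
  show ?case unfolding sum.lessThan_Suc distrib_left[of "17::real"]
    using conjunct1[OF step] conjunct2[OF step] IH(2) by (intro conjI) linarith+
qed

lemma cascM_moment:
  "integrable M (\<lambda>x. \<bar>cascM Wf Zf m j p x\<bar> powr kappa) \<and>
    (\<integral>x. \<bar>cascM Wf Zf m j p x\<bar> powr kappa \<partial>M)
      \<le> \<bar>mart_coeff j 0\<bar> powr kappa + 17 * (\<Sum>i<j. 2 ^ i * (\<bar>mart_coeff j (Suc i)\<bar> powr kappa * EW (p * kappa) ^ i * KU))
        + 17 * (2 ^ j * (\<bar>2 powr (- real j * p)\<bar> powr kappa * EW (p * kappa) ^ j * KZ))"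
proof -
  note level = mart_moment[of j j m, OF order_refl]
  have leaves: "integrable M (\<lambda>x. \<bar>cascM Wf Zf m j p x\<bar> powr kappa) \<and>
    (\<integral>x. \<bar>cascM Wf Zf m j p x\<bar> powr kappa \<partial>M)
      \<le> (\<integral>x. \<bar>mart m j j x\<bar> powr kappa \<partial>M)
        + 17 * (2 ^ j * (\<bar>2 powr (- real j * p)\<bar> powr kappa * EW (p * kappa) ^ j * KZ))"
    unfolding cascM_eq
    by (rule incr_sum_moment[where A = desc])
      (rule desc_NE levels_desc_disjoint desc_disjoint Zc_sigW Zc_centred Zc_moment
        mart_sigW conjunct1[OF level] | assumption)+
  show ?thesis
    using conjunct1[OF leaves] conjunct2[OF leaves] conjunct2[OF level] by (intro conjI) linarith+
qed

text \<open>The summand of the claimed bound, and its closed form in terms of \<open>e = E W^p\<close> and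
  \<open>E W^(p kappa)\<close>: by definition of \<open>tau\<close>, \<open>2 powr (-tau p) = 2 e / 2 powr p\<close>, and similarly
  for the exponent \<open>p kappa\<close>.\<close>

definition level_weight :: "nat \<Rightarrow> nat \<Rightarrow> real" where
  "level_weight j k = 2 powr (- real j * kappa * tau M W p) *
     (2 powr (- real k * tau M W (p * kappa)) * 2 powr (real k * kappa * tau M W p))"

lemma level_weight_nonneg: "0 \<le> level_weight j k"
  unfolding level_weight_def by simp

lemma level_weight_eq:
  assumes "k \<le> j"
  shows "level_weight j k
    = 2 powr (- real j * p * kappa) * (2 * e) powr (real (j - k) * kappa) * (2 * EW (p * kappa)) ^ k"
proof -
  define a where "a = log 2 e"
  define b where "b = log 2 (EW (p * kappa))"
  have e_eq: "2 * e = 2 powr (1 + a)" unfolding a_def e_def using EW_pos by (simp add: powr_add)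
  have q_eq: "2 * EW (p * kappa) = 2 powr (1 + b)" unfolding b_def using EW_pos by (simp add: powr_add)
  have tau_p: "tau M W p = p - a - 1" unfolding tau_def a_def e_def EW_def ..
  have tau_q: "tau M W (p * kappa) = p * kappa - b - 1" unfolding tau_def b_def EW_def ..
  have "level_weight j k = 2 powr (- real j * p * kappa + (1 + a) * (real (j - k) * kappa) + real k * (1 + b))"
    unfolding level_weight_def tau_p tau_q using assms
    by (simp add: powr_add[symmetric] of_nat_diff algebra_simps)
  also have "\<dots> = 2 powr (- real j * p * kappa) * 2 powr ((1 + a) * (real (j - k) * kappa))
      * 2 powr (real k * (1 + b))"
    by (simp only: powr_add)
  also have "2 powr ((1 + a) * (real (j - k) * kappa)) = (2 * e) powr (real (j - k) * kappa)"
    unfolding e_eq by (simp add: powr_powr)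
  also have "2 powr (real k * (1 + b)) = (2 * EW (p * kappa)) ^ k"
    unfolding q_eq by (simp add: powr_powr mult.commute flip: powr_realpow)
  finally show ?thesis .
qed

lemma mart_coeff_powr:
  "\<bar>mart_coeff j k\<bar> powr kappa = 2 powr (- real j * p * kappa) * (2 * e) powr (real (j - k) * kappa) * \<bar>mu\<bar> powr kappa"
proof -
  have "\<bar>mart_coeff j k\<bar> = 2 powr (- real j * p) * (2 * e) powr real (j - k) * \<bar>mu\<bar>"
    unfolding mart_coeff_def using e_pos by (simp add: abs_mult powr_realpow)
  then show ?thesis using e_pos by (simp add: powr_mult powr_powr)
qed

definition c_level :: real where
  "c_level = (2 * e) powr (- kappa) * \<bar>mu\<bar> powr kappa * KU"

lemma root_term: "\<bar>mart_coeff j 0\<bar> powr kappa = \<bar>mu\<bar> powr kappa * level_weight j 0"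
  unfolding mart_coeff_powr level_weight_eq[OF le0] using e_pos by simp

lemma level_term:
  assumes "i < j"
  shows "2 ^ i * (\<bar>mart_coeff j (Suc i)\<bar> powr kappa * EW (p * kappa) ^ i * KU) = c_level * level_weight j i"
proof -
  have "(2 * e) powr (real (j - Suc i) * kappa) = (2 * e) powr (- kappa) * (2 * e) powr (real (j - i) * kappa)"
    using assms by (simp add: powr_add[symmetric] of_nat_diff algebra_simps)
  then show ?thesis
    unfolding mart_coeff_powr level_weight_eq[OF less_imp_le[OF assms]] c_level_def
    by (simp add: power_mult_distrib)
qed

lemma leaf_term:
  "2 ^ j * (\<bar>2 powr (- real j * p)\<bar> powr kappa * EW (p * kappa) ^ j * KZ) = KZ * level_weight j j"
  unfolding level_weight_eq[OF order_refl] using e_pos by (simp add: powr_powr power_mult_distrib)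

definition C_bound :: real where
  "C_bound = \<bar>mu\<bar> powr kappa + 17 * c_level + 17 * KZ"

lemma moment_terms_le:
  "\<bar>mart_coeff j 0\<bar> powr kappa + 17 * (\<Sum>i<j. 2 ^ i * (\<bar>mart_coeff j (Suc i)\<bar> powr kappa * EW (p * kappa) ^ i * KU))
     + 17 * (2 ^ j * (\<bar>2 powr (- real j * p)\<bar> powr kappa * EW (p * kappa) ^ j * KZ))
   \<le> C_bound * (\<Sum>k=0..j. level_weight j k)"
proof -
  have c_level: "0 \<le> c_level" unfolding c_level_def KU_def using EW_nonneg by simp
  have KZ: "0 \<le> KZ" unfolding KZ_def by (intro integral_nonneg_AE) auto
  have levels_sum: "(\<Sum>i<j. 2 ^ i * (\<bar>mart_coeff j (Suc i)\<bar> powr kappa * EW (p * kappa) ^ i * KU))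
      = c_level * (\<Sum>i<j. level_weight j i)"
    by (simp add: level_term sum_distrib_left)
  have "(\<Sum>i<j. level_weight j i) \<le> (\<Sum>k=0..j. level_weight j k)"
    by (intro sum_mono2) (auto simp: level_weight_nonneg)
  moreover have "level_weight j 0 \<le> (\<Sum>k=0..j. level_weight j k)"
    "level_weight j j \<le> (\<Sum>k=0..j. level_weight j k)"
    by (auto intro!: member_le_sum simp: level_weight_nonneg)
  ultimately have "\<bar>mu\<bar> powr kappa * level_weight j 0 + 17 * (c_level * (\<Sum>i<j. level_weight j i))
        + 17 * (KZ * level_weight j j)
      \<le> \<bar>mu\<bar> powr kappa * (\<Sum>k=0..j. level_weight j k) + 17 * (c_level * (\<Sum>k=0..j. level_weight j k))
        + 17 * (KZ * (\<Sum>k=0..j. level_weight j k))"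
    using c_level KZ by (intro add_mono mult_left_mono) auto
  then show ?thesis unfolding root_term levels_sum leaf_term C_bound_def by (simp add: algebra_simps)
qed

lemma cascM_moment_bound:
  "(\<integral>\<^sup>+ x. ennreal (\<bar>cascM Wf Zf m j p x\<bar> powr (1 + \<epsilon>)) \<partial>M)
     \<le> ennreal (C_bound * 2 powr (- real j * (1 + \<epsilon>) * tau M W p) *
         (\<Sum>k=0..j. 2 powr (- real k * tau M W (p * (1 + \<epsilon>))) * 2 powr (real k * (1 + \<epsilon>) * tau M W p)))"
proof -
  note bound = cascM_moment[of m j]
  have "(\<integral>\<^sup>+ x. ennreal (\<bar>cascM Wf Zf m j p x\<bar> powr kappa) \<partial>M)
      = ennreal (\<integral>x. \<bar>cascM Wf Zf m j p x\<bar> powr kappa \<partial>M)"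
    using bound by (intro nn_integral_eq_integral) auto
  also have "\<dots> \<le> ennreal (C_bound * (\<Sum>k=0..j. level_weight j k))"
    using bound moment_terms_le[of j] by (intro ennreal_leI) auto
  also have "C_bound * (\<Sum>k=0..j. level_weight j k) = C_bound * 2 powr (- real j * kappa * tau M W p) *
      (\<Sum>k=0..j. 2 powr (- real k * tau M W (p * kappa)) * 2 powr (real k * kappa * tau M W p))"
    unfolding level_weight_def by (simp add: sum_distrib_left mult.assoc)
  finally show ?thesis .
qed

end

theorem lemmaA2:
  fixes M :: "'a measure"
    and W Z :: "'a \<Rightarrow> real"
    and Wf Zf :: "nat \<Rightarrow> bool list \<Rightarrow> 'a \<Rightarrow> real"
    and p \<epsilon> :: real
  assumes "prob_space M"
    and W_rv: "W \<in> borel_measurable M"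
    and W_pos: "AE x in M. W x > 0"
    and W_mean: "integral\<^sup>L M W = 1"
    and W_moments: "\<And>q::real. integrable M (\<lambda>x. W x powr q)"
    and Wf_rv: "\<And>m r. r \<noteq> [] \<Longrightarrow> Wf m r \<in> borel_measurable M"
    and Wf_law: "\<And>m r. r \<noteq> [] \<Longrightarrow> distr M borel (Wf m r) = distr M borel W"
    and Wf_indep: "prob_space.indep_vars M (\<lambda>_. borel) (\<lambda>(m, r). Wf m r) {(m, r). r \<noteq> []}"
    and Z_rv: "Z \<in> borel_measurable M"
    and Zf_meas: "\<And>m r. measurable_wrt M (Zf m r) (\<lambda>r'. Wf m (r @ r')) {r'. r' \<noteq> []}"
    and Zf_law: "\<And>m r. distr M borel (Zf m r) = distr M borel Z"
    and eps: "0 < \<epsilon>" "\<epsilon> \<le> 1"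
    and Z_mom: "integrable M (\<lambda>x. \<bar>Z x\<bar> powr (1 + \<epsilon>))"
  shows "\<exists>C::real. \<forall>m j.
     (\<integral>\<^sup>+ x. ennreal (\<bar>cascM Wf Zf m j p x\<bar> powr (1 + \<epsilon>)) \<partial>M)
       \<le> ennreal (C * 2 powr (- real j * (1 + \<epsilon>) * tau M W p) *
           (\<Sum>k=0..j. 2 powr (- real k * tau M W (p * (1 + \<epsilon>))) *
                      2 powr (real k * (1 + \<epsilon>) * tau M W p)))"
proof -
  interpret cascade M W Z Wf Zf p \<epsilon>
    using assms unfolding cascade_def cascade_axioms_def by auto
  show ?thesis by (intro exI[of _ C_bound] allI cascM_moment_bound)
qed

end
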